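(* Let $\mathbf{H}\in\mathbb{R}^{m\times n}$ have full column rank (rows indexed by meters $1,\dots,m$), and let $\mathcal{S}_1,\mathcal{S}_2$ be a partition of a critical set $\mathcal{S}_1\cup\mathcal{S}_2$ of meters. Let $\bar{\mathbf{H}}$ be $\mathbf{H}$ with the rows indexed by $\mathcal{S}_1\cup\mathcal{S}_2$ deleted (so $\bar{\mathbf{H}}$ has rank $n-1$), and let $\Delta\mathbf{x}$ be a unit vector spanning $\mathcal{N}(\bar{\mathbf{H}})$. Let $\mathbf{H}_1$ (resp. $\mathbf{H}_2$) be the $m\times n$ matrix obtained from $\mathbf{H}$ by replacing the rows indexed by $\mathcal{S}_2$ (resp. $\mathcal{S}_1$) with zero rows. Suppose that when the noiseless iterative state estimation is run on the input vector $\mathbf{H}_1\Delta\mathbf{x}$, there is a unique $\mathbf{y}\in\mathbb{R}^n$ such that the final state estimate equals $\mathbf{y}$ for every possible way of breaking ties in bad data identification. Then for every true state $\mathbf{x}\in\mathbb{R}^n$ and every $\eta\in\mathbb{R}$: (1) If the (noisy) iterative state estimation is run on $\bar{\mathbf{z}}=\mathbf{H}\mathbf{x}+\mathbf{e}+\eta\,\mathbf{H}_1\Delta\mathbf{x}$, then $$\lim_{\sigma^2\to 0}\Pr\big(\bar{\mathbf{z}}^{(N)}=\mathbf{H}^{(N)}(\mathbf{x}+\eta\,\mathbf{y})+\mathbf{e}^{(N)}\big)=1.$$ (2) If the (noisy) iterative state estimation is run on $\bar{\mathbf{z}}=\mathbf{H}\mathbf{x}+\mathbf{e}+\eta\,\mathbf{H}_2\Delta\mathbf{x}$,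 then $$\lim_{\sigma^2\to 0}\Pr\big(\bar{\mathbf{z}}^{(N)}=\mathbf{H}^{(N)}(\mathbf{x}+\eta(\Delta\mathbf{x}-\mathbf{y}))+\mathbf{e}^{(N)}\big)=1.$$ Here $N$ is the (random) total number of iterations, and $\bar{\mathbf{z}}^{(N)},\mathbf{H}^{(N)},\mathbf{e}^{(N)}$ are obtained from $\bar{\mathbf{z}},\mathbf{H},\mathbf{e}$ by deleting the rows of all meters removed during the first $N-1$ iterations.
   Context: Measurement model (DC model): $\mathbf{z}=\mathbf{H}\mathbf{x}+\mathbf{e}$ with $\mathbf{H}\in\mathbb{R}^{m\times n}$ of full column rank ("the network is observable"), $\mathbf{e}\sim\mathcal{N}(\mathbf{0},\boldsymbol{\Sigma})$, $\boldsymbol{\Sigma}=\sigma^2\bar{\boldsymbol{\Sigma}}$ with $\bar{\boldsymbol{\Sigma}}$ diagonal with positive entries summing to $1$, and $\sigma^2>0$ a scaling factor. Removing a set of meters means deleting the corresponding rows; a set of meters is observable-preserving if the remaining matrix has full column rank. A set $\mathcal{S}_0$ of meters is a critical set if removing all meters of $\mathcal{S}_0$ makes the remaining matrix rank deficient while removing any strict subset of $\mathcal{S}_0$ does not. Iterative state estimation on an input vector $\mathbf{z}$: set $\mathbf{z}^{(1)}=\mathbf{z}$, $\mathbf{H}^{(1)}=\mathbf{H}$, $\boldsymbol{\Sigma}^{(1)}=\boldsymbol{\Sigma}$. At iteration $k$: compute $\hat{\mathbf{x}}^{(k)}=((\mathbf{H}^{(k)})^T(\boldsymbol{\Sigma}^{(k)})^{-1}\mathbf{H}^{(k)})^{-1}(\mathbf{H}^{(k)})^T(\boldsymbol{\Sigma}^{(k)})^{-1}\mathbf{z}^{(k)}$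 and residue $\mathbf{r}^{(k)}=\mathbf{z}^{(k)}-\mathbf{H}^{(k)}\hat{\mathbf{x}}^{(k)}=\mathbf{W}^{(k)}\mathbf{z}^{(k)}$, where $\mathbf{W}^{(k)}=\mathbf{I}-\mathbf{H}^{(k)}((\mathbf{H}^{(k)})^T(\boldsymbol{\Sigma}^{(k)})^{-1}\mathbf{H}^{(k)})^{-1}(\mathbf{H}^{(k)})^T(\boldsymbol{\Sigma}^{(k)})^{-1}$. Bad data detection: if $(\mathbf{r}^{(k)})^T(\boldsymbol{\Sigma}^{(k)})^{-1}\mathbf{r}^{(k)}\le\tau^{(k)}$ the data are declared good, the algorithm stops with $N=k$ and outputs $\hat{\mathbf{x}}^{(k)}$; here $\tau^{(k)}>0$ is a fixed threshold not depending on $\sigma^2$. Otherwise bad data identification: form the normalized residue $\tilde{\mathbf{r}}^{(k)}=\boldsymbol{\Omega}^{(k)}\mathbf{r}^{(k)}$ with $\boldsymbol{\Omega}^{(k)}$ diagonal, $\boldsymbol{\Omega}^{(k)}_{ii}=0$ if the single meter $\{i\}$ is a critical set for $\mathbf{H}^{(k)}$, and $\boldsymbol{\Omega}^{(k)}_{ii}=1/\sqrt{(\mathbf{W}^{(k)}\boldsymbol{\Sigma}^{(k)})_{ii}}$ otherwise; remove the meter with the largest $|\tilde r^{(k)}_i|$ (ties broken arbitrarily), i.e. delete its row from $\mathbf{z}^{(k)}$, $\mathbf{H}^{(k)}$ and its row and column from $\boldsymbol{\Sigma}^{(k)}$, to get $\mathbf{z}^{(k+1)},\mathbf{H}^{(k+1)},\boldsymbol{\Sigma}^{(k+1)}$,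 and continue. The noiseless iterative state estimation is the same procedure with $\boldsymbol{\Sigma}$ replaced by $\bar{\boldsymbol{\Sigma}}$ and with detection declaring data good if and only if $(\mathbf{r}^{(k)})^T(\bar{\boldsymbol{\Sigma}}^{(k)})^{-1}\mathbf{r}^{(k)}=0$; its final state estimate is $\hat{\mathbf{x}}^{(N)}$. *)

theory Defs
  imports "HOL-Probability.Probability"
begin

text \<open>Measurement matrix H is represented by its rows: H :: 'm \<Rightarrow> real^'n,
  row i of H is H i (meters indexed by the finite type 'm, states by 'n). A set R of meters denotes
  the remaining rows; H restricted to R is the current matrix H^(k).
  Diagonal covariance entries are given by s :: 'm \<Rightarrow> real.\<close>

definition row_rank :: "('m \<Rightarrow> real^'n) \<Rightarrow> 'm set \<Rightarrow> nat" where
  "row_rank H R = dim (H ` R)"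

definition full_col_rank :: "('m \<Rightarrow> real^'n::finite) \<Rightarrow> 'm set \<Rightarrow> bool" where
  "full_col_rank H R \<longleftrightarrow> row_rank H R = CARD('n)"

definition critical_set :: "('m \<Rightarrow> real^'n::finite) \<Rightarrow> 'm set \<Rightarrow> 'm set \<Rightarrow> bool" where
  "critical_set H R S0 \<longleftrightarrow> S0 \<subseteq> R \<and> \<not> full_col_rank H (R - S0)
      \<and> (\<forall>T. T \<subset> S0 \<longrightarrow> full_col_rank H (R - T))"

definition gram :: "('m \<Rightarrow> real^'n) \<Rightarrow> ('m \<Rightarrow> real) \<Rightarrow> 'm set \<Rightarrow> real^'n^'n" where
  "gram H s R = (\<Sum>i\<in>R. (1 / s i) *\<^sub>R (\<chi> a b. H i $ a * H i $ b))"

definition est :: "('m \<Rightarrow> real^'n) \<Rightarrow> ('m \<Rightarrow> real) \<Rightarrow> 'm set \<Rightarrow> ('m \<Rightarrow> real) \<Rightarrow> real^'n" where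
  "est H s R z = matrix_inv (gram H s R) *v (\<Sum>i\<in>R. (z i / s i) *\<^sub>R H i)"

definition resid :: "('m \<Rightarrow> real^'n) \<Rightarrow> ('m \<Rightarrow> real) \<Rightarrow> 'm set \<Rightarrow> ('m \<Rightarrow> real) \<Rightarrow> 'm \<Rightarrow> real" where
  "resid H s R z i = z i - H i \<bullet> est H s R z"

definition Jstat :: "('m \<Rightarrow> real^'n) \<Rightarrow> ('m \<Rightarrow> real) \<Rightarrow> 'm set \<Rightarrow> ('m \<Rightarrow> real) \<Rightarrow> real" where
  "Jstat H s R z = (\<Sum>i\<in>R. (resid H s R z i)\<^sup>2 / s i)"

definition WSigma_diag :: "('m \<Rightarrow> real^'n) \<Rightarrow> ('m \<Rightarrow> real) \<Rightarrow> 'm set \<Rightarrow> 'm \<Rightarrow> real" where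
  "WSigma_diag H s R i = s i - H i \<bullet> (matrix_inv (gram H s R) *v H i)"

definition omega :: "('m \<Rightarrow> real^'n::finite) \<Rightarrow> ('m \<Rightarrow> real) \<Rightarrow> 'm set \<Rightarrow> 'm \<Rightarrow> real" where
  "omega H s R i = (if critical_set H R {i} then 0 else 1 / sqrt (WSigma_diag H s R i))"

definition nresid :: "('m \<Rightarrow> real^'n::finite) \<Rightarrow> ('m \<Rightarrow> real) \<Rightarrow> 'm set \<Rightarrow> ('m \<Rightarrow> real) \<Rightarrow> 'm \<Rightarrow> real" where
  "nresid H s R z i = omega H s R i * resid H s R z i"

text \<open>Iterative state estimation as a (nondeterministic, for tie breaking) relation:
  ise_run H s good z k R N Rf : starting at iteration k with remaining meters R,
  some run stops at iteration N with remaining meters Rf.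
  good k v decides whether data are declared good at iteration k given
  v = r^T Sigma^{-1} r.\<close>
inductive ise_run :: "('m \<Rightarrow> real^'n::finite) \<Rightarrow> ('m \<Rightarrow> real) \<Rightarrow> (nat \<Rightarrow> real \<Rightarrow> bool)
    \<Rightarrow> ('m \<Rightarrow> real) \<Rightarrow> nat \<Rightarrow> 'm set \<Rightarrow> nat \<Rightarrow> 'm set \<Rightarrow> bool"
  for H s good z where
  stop: "good k (Jstat H s R z) \<Longrightarrow> ise_run H s good z k R k R"
| remove: "\<not> good k (Jstat H s R z) \<Longrightarrow> i \<in> R
     \<Longrightarrow> (\<forall>j\<in>R. \<bar>nresid H s R z j\<bar> \<le> \<bar>nresid H s R z i\<bar>)
     \<Longrightarrow> ise_run H s good z (Suc k) (R - {i}) N Rf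
     \<Longrightarrow> ise_run H s good z k R N Rf"

text \<open>Noisy run (Sigma = sigma2 * Sigmabar, thresholds tau) started from all meters\<close>
definition noisy_run :: "('m \<Rightarrow> real^'n::finite) \<Rightarrow> ('m \<Rightarrow> real) \<Rightarrow> real \<Rightarrow> (nat \<Rightarrow> real)
    \<Rightarrow> ('m \<Rightarrow> real) \<Rightarrow> nat \<Rightarrow> 'm set \<Rightarrow> bool" where
  "noisy_run H w sigma2 tau z N Rf \<longleftrightarrow>
     ise_run H (\<lambda>i. sigma2 * w i) (\<lambda>k v. v \<le> tau k) z 1 UNIV N Rf"

definition noiseless_run :: "('m \<Rightarrow> real^'n::finite) \<Rightarrow> ('m \<Rightarrow> real)
    \<Rightarrow> ('m \<Rightarrow> real) \<Rightarrow> nat \<Rightarrow> 'm set \<Rightarrow> bool" where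
  "noiseless_run H w z N Rf \<longleftrightarrow> ise_run H w (\<lambda>k v. v = 0) z 1 UNIV N Rf"

definition noise_measure :: "('m \<Rightarrow> real) \<Rightarrow> real \<Rightarrow> ('m \<Rightarrow> real) measure" where
  "noise_measure w sigma2 = PiM UNIV (\<lambda>i. density lborel (normal_density 0 (sqrt (sigma2 * w i))))"

definition zero_rows :: "('m \<Rightarrow> real^'n) \<Rightarrow> 'm set \<Rightarrow> 'm \<Rightarrow> real^'n" where
  "zero_rows H S i = (if i \<in> S then 0 else H i)"

end

theory Submission
  imports Defs
begin

text \<open>Scaling \<Sigma> by \<sigma>^2 leaves the estimates unchanged, divides the detection statistic
  by \<sigma>^2 and the normalized residues by \<sigma>.  Hence, once the Gaussian noise is uniformly
  below some d (an event of probability tending to 1 as \<sigma>^2 \<rightarrow> 0), the noisy procedure on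
  H x + e + \<eta> a never declares the data good while the noiseless residue of a is non-zero,
  and every meter it removes is one the noiseless procedure on a may remove as well (a
  strictly smaller normalized residue stays smaller under small perturbations).  So every
  noisy run ends inside the final meter set of some noiseless run, where a is fitted
  exactly by H y; there \<eta> a is indistinguishable from the state shift \<eta> y.  Part (2)
  reduces to part (1) because H1 \<Delta>x + H2 \<Delta>x = H \<Delta>x is itself a state shift.\<close>

section \<open>Weighted least squares\<close>

lemma span_rows_eq_UNIV:
  fixes H :: "'m \<Rightarrow> real^'n::finite"
  assumes "full_col_rank H R"
  shows "span (H ` R) = UNIV"
  using assms unfolding full_col_rank_def row_rank_def
  by (metis dim_eq_full DIM_cart DIM_real mult_1_right)

lemma full_col_rank_ex_inner_nonzero:
  fixes H :: "'m \<Rightarrow> real^'n::finite"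
  assumes "full_col_rank H R" "v \<noteq> 0"
  shows "\<exists>j\<in>R. H j \<bullet> v \<noteq> 0"
proof (rule ccontr)
  assume "\<not> ?thesis"
  then have "\<forall>u\<in>H ` R. orthogonal v u"
    by (auto simp: orthogonal_def inner_commute)
  then have "orthogonal v v"
    using span_rows_eq_UNIV[OF assms(1)] by (metis UNIV_I orthogonal_to_span)
  then show False
    using assms(2) by (simp add: orthogonal_def)
qed

lemma not_full_col_rank_ex_kernel:
  fixes H :: "'m \<Rightarrow> real^'n::finite"
  assumes "\<not> full_col_rank H R"
  shows "\<exists>v. v \<noteq> 0 \<and> (\<forall>j\<in>R. H j \<bullet> v = 0)"
proof -
  have "dim (H ` R) < DIM(real^'n)"
    using assms dim_subset_UNIV_cart[of "H ` R"]
    unfolding full_col_rank_def row_rank_def by (simp add: DIM_cart)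
  then obtain v where "v \<noteq> 0" "\<And>u. u \<in> span (H ` R) \<Longrightarrow> orthogonal v u"
    by (metis orthogonal_to_subspace_exists)
  then show ?thesis
    by (metis image_eqI inner_commute orthogonal_def span_base)
qed

lemma full_col_rank_remove_iff_not_critical:
  fixes H :: "'m \<Rightarrow> real^'n::finite"
  assumes "full_col_rank H R" "i \<in> R"
  shows "full_col_rank H (R - {i}) \<longleftrightarrow> \<not> critical_set H R {i}"
proof -
  have "T \<subset> {i} \<longleftrightarrow> T = {}" for T :: "'m set" by auto
  then show ?thesis
    unfolding critical_set_def using assms by auto
qed

lemma matrix_mult_matrix_inv_vector:
  fixes A :: "'a::comm_semiring_1^'n::finite^'n"
  assumes "invertible A"
  shows "A *v (matrix_inv A *v b) = b"
proof -
  have "A ** matrix_inv A = mat 1"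
    using someI_ex[OF assms[unfolded invertible_def]] unfolding matrix_inv_def by auto
  then show ?thesis
    by (simp add: matrix_vector_mul_assoc)
qed

lemma matrix_inv_mult_vector_eqI:
  fixes A :: "'a::comm_semiring_1^'n::finite^'n"
  assumes "invertible A" "A *v u = b"
  shows "matrix_inv A *v b = u"
proof -
  have "matrix_inv A ** A = mat 1"
    using someI_ex[OF assms(1)[unfolded invertible_def]] unfolding matrix_inv_def by auto
  then show ?thesis
    using assms(2) by (metis matrix_vector_mul_assoc matrix_vector_mul_lid)
qed

lemma gram_mult_vector:
  "gram H s R *v v = (\<Sum>i\<in>R. ((H i \<bullet> v) / s i) *\<^sub>R H i)"
  unfolding gram_def
  by (simp add: vec_eq_iff matrix_vector_mult_def sum_distrib_left sum_distrib_right
      inner_vec_def sum_component algebra_simps)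
     (simp add: sum_divide_distrib, subst sum.swap, simp)

lemma inner_gram_mult_vector:
  "v \<bullet> (gram H s R *v v) = (\<Sum>i\<in>R. (H i \<bullet> v)\<^sup>2 / s i)"
  unfolding gram_mult_vector inner_sum_right
  by (auto intro!: sum.cong simp: power2_eq_square inner_commute)

lemma sum_weighted_squares_eq_0_iff:
  fixes f :: "'a \<Rightarrow> real"
  assumes "finite R" "\<forall>i. s i > 0"
  shows "(\<Sum>i\<in>R. (f i)\<^sup>2 / s i) = 0 \<longleftrightarrow> (\<forall>i\<in>R. f i = 0)"
  using assms
  by (subst sum_nonneg_eq_0_iff) (auto intro: divide_nonneg_pos simp: less_imp_neq[symmetric])

lemma invertible_gram:
  fixes H :: "'m::finite \<Rightarrow> real^'n::finite"
  assumes s: "\<forall>i. s i > 0" and rank: "full_col_rank H R"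
  shows "invertible (gram H s R)"
  unfolding invertible_left_inverse matrix_left_invertible_ker
proof (intro allI impI)
  fix v assume "gram H s R *v v = 0"
  then have "\<forall>i\<in>R. H i \<bullet> v = 0"
    using inner_gram_mult_vector[of v H s R] sum_weighted_squares_eq_0_iff[OF finite s] by simp
  then show "v = 0"
    using full_col_rank_ex_inner_nonzero[OF rank] by blast
qed

lemma est_noiseless_measurement:
  fixes H :: "'m::finite \<Rightarrow> real^'n::finite"
  assumes "\<forall>i. s i > 0" "full_col_rank H R"
  shows "est H s R (\<lambda>i. H i \<bullet> x) = x"
  unfolding est_def
  by (rule matrix_inv_mult_vector_eqI[OF invertible_gram[OF assms]]) (simp add: gram_mult_vector)

lemma gram_mult_est:
  fixes H :: "'m::finite \<Rightarrow> real^'n::finite"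
  assumes "\<forall>i. s i > 0" "full_col_rank H R"
  shows "gram H s R *v est H s R z = (\<Sum>i\<in>R. (z i / s i) *\<^sub>R H i)"
  unfolding est_def by (rule matrix_mult_matrix_inv_vector[OF invertible_gram[OF assms]])

lemma resid_normal_equation:
  fixes H :: "'m::finite \<Rightarrow> real^'n::finite"
  assumes "\<forall>i. s i > 0" "full_col_rank H R"
  shows "(\<Sum>i\<in>R. (resid H s R z i / s i) *\<^sub>R H i) = 0"
proof -
  have "(\<Sum>i\<in>R. (resid H s R z i / s i) *\<^sub>R H i)
      = (\<Sum>i\<in>R. (z i / s i) *\<^sub>R H i) - gram H s R *v est H s R z"
    unfolding resid_def gram_mult_vector
    by (simp add: diff_divide_distrib scaleR_diff_left sum_subtractf)
  then show ?thesis
    using gram_mult_est[OF assms] by simp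
qed

lemma Jstat_eq_0_iff:
  fixes H :: "'m::finite \<Rightarrow> real^'n::finite"
  assumes "\<forall>i. s i > 0"
  shows "Jstat H s R z = 0 \<longleftrightarrow> (\<forall>j\<in>R. resid H s R z j = 0)"
  unfolding Jstat_def by (rule sum_weighted_squares_eq_0_iff[OF finite assms])

text \<open>A single critical meter is the only row seeing some direction v, so the normal
  equation, paired with v, forces its residue to vanish.\<close>

lemma resid_critical_eq_0:
  fixes H :: "'m::finite \<Rightarrow> real^'n::finite"
  assumes s: "\<forall>i. s i > 0" and rank: "full_col_rank H R" and i: "i \<in> R"
    and crit: "critical_set H R {i}"
  shows "resid H s R z i = 0"
proof -
  obtain v where v: "v \<noteq> 0" "\<forall>j\<in>R - {i}. H j \<bullet> v = 0"
    using not_full_col_rank_ex_kernel full_col_rank_remove_iff_not_critical[OF rank i] crit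
    by blast
  have Hi: "H i \<bullet> v \<noteq> 0"
    using full_col_rank_ex_inner_nonzero[OF rank v(1)] v(2) by auto
  have "0 = (\<Sum>j\<in>R. (resid H s R z j / s j) *\<^sub>R H j) \<bullet> v"
    using resid_normal_equation[OF s rank] by simp
  also have "\<dots> = (\<Sum>j\<in>R. (resid H s R z j / s j) * (H j \<bullet> v))"
    by (simp add: inner_sum_left)
  also have "\<dots> = (resid H s R z i / s i) * (H i \<bullet> v)"
    by (subst sum.remove[OF _ i]) (auto simp: v(2))
  finally show ?thesis
    using Hi s by (metis divide_eq_0_iff less_irrefl mult_eq_0_iff)
qed

text \<open>If (W \<Sigma>)_ii = 0 then g = G^-1 H_i satisfies H_i \<bullet> g = s_i, so the Gram matrix of the
  remaining rows kills g; that matrix is invertible unless i is critical.\<close>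

lemma WSigma_diag_nonzero:
  fixes H :: "'m::finite \<Rightarrow> real^'n::finite"
  assumes s: "\<forall>i. s i > 0" and rank: "full_col_rank H R" and i: "i \<in> R"
    and not_crit: "\<not> critical_set H R {i}"
  shows "WSigma_diag H s R i \<noteq> 0"
proof
  assume W: "WSigma_diag H s R i = 0"
  define g where "g = matrix_inv (gram H s R) *v H i"
  have Hg: "H i \<bullet> g = s i"
    using W unfolding WSigma_diag_def g_def by simp
  have rank': "full_col_rank H (R - {i})"
    using full_col_rank_remove_iff_not_critical[OF rank i] not_crit by simp
  have "gram H s R *v g = H i"
    unfolding g_def by (rule matrix_mult_matrix_inv_vector[OF invertible_gram[OF s rank]])
  moreover have "gram H s R *v g = gram H s (R - {i}) *v g + ((H i \<bullet> g) / s i) *\<^sub>R H i"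
    unfolding gram_mult_vector by (subst sum.remove[OF _ i]) auto
  ultimately have "gram H s (R - {i}) *v g = 0"
    using Hg s by (simp add: less_imp_neq[symmetric])
  then have "g = 0"
    using invertible_gram[OF s rank']
    by (metis matrix_inv_mult_vector_eqI matrix_vector_mult_0_right)
  then show False
    using Hg s by (metis inner_zero_right less_irrefl)
qed

lemma inner_est_eq_sum:
  "H j \<bullet> est H s R z = (\<Sum>i\<in>R. z i * (H j \<bullet> (matrix_inv (gram H s R) *v H i)) / s i)"
proof -
  have "est H s R z = (\<Sum>i\<in>R. (z i / s i) *\<^sub>R (matrix_inv (gram H s R) *v H i))"
    unfolding est_def
    by (simp add: linear_sum[OF matrix_vector_mul_linear] o_def matrix_vector_mult_scaleR)
  then show ?thesis
    by (simp add: inner_sum_right)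
qed

lemma resid_add:
  "resid H s R (\<lambda>i. u i + v i) j = resid H s R u j + resid H s R v j"
  unfolding resid_def inner_est_eq_sum by (simp add: distrib_right add_divide_distrib sum.distrib)

lemma resid_mult:
  "resid H s R (\<lambda>i. c * u i) j = c * resid H s R u j"
  unfolding resid_def inner_est_eq_sum
  by (simp add: sum_distrib_left right_diff_distrib mult.assoc times_divide_eq_right)

lemma resid_add_state:
  fixes H :: "'m::finite \<Rightarrow> real^'n::finite"
  assumes "\<forall>i. s i > 0" "full_col_rank H R"
  shows "resid H s R (\<lambda>i. H i \<bullet> x + z i) j = resid H s R z j"
  using resid_add[of H s R "\<lambda>i. H i \<bullet> x" z j] est_noiseless_measurement[OF assms]
  by (simp add: resid_def)

lemma Jstat_add_state:
  fixes H :: "'m::finite \<Rightarrow> real^'n::finite"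
  assumes "\<forall>i. s i > 0" "full_col_rank H R"
  shows "Jstat H s R (\<lambda>i. H i \<bullet> x + z i) = Jstat H s R z"
  unfolding Jstat_def resid_add_state[OF assms] ..

lemma nresid_add_state:
  fixes H :: "'m::finite \<Rightarrow> real^'n::finite"
  assumes "\<forall>i. s i > 0" "full_col_rank H R"
  shows "nresid H s R (\<lambda>i. H i \<bullet> x + z i) j = nresid H s R z j"
  unfolding nresid_def resid_add_state[OF assms] ..

lemma nresid_add:
  "nresid H s R (\<lambda>i. u i + v i) j = nresid H s R u j + nresid H s R v j"
  unfolding nresid_def resid_add by (simp add: distrib_left)

lemma nresid_mult:
  "nresid H s R (\<lambda>i. c * u i) j = c * nresid H s R u j"
  unfolding nresid_def resid_mult by simp

section \<open>Scaling the covariance\<close>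

lemma gram_scaled_weights:
  assumes "t > 0"
  shows "gram H (\<lambda>i. t * s i) R = (1 / t) *\<^sub>R gram H s R"
  unfolding gram_def scaleR_sum_right using assms by (intro sum.cong) (auto simp: scaleR_scaleR)

lemma matrix_inv_gram_scaled_weights:
  fixes H :: "'m::finite \<Rightarrow> real^'n::finite"
  assumes s: "\<forall>i. s i > 0" and rank: "full_col_rank H R" and t: "t > 0"
  shows "matrix_inv (gram H (\<lambda>i. t * s i) R) *v v = t *\<^sub>R (matrix_inv (gram H s R) *v v)"
proof (rule matrix_inv_mult_vector_eqI)
  show "invertible (gram H (\<lambda>i. t * s i) R)"
    using s t rank by (intro invertible_gram) auto
  show "gram H (\<lambda>i. t * s i) R *v (t *\<^sub>R (matrix_inv (gram H s R) *v v)) = v"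
    using t matrix_mult_matrix_inv_vector[OF invertible_gram[OF s rank]]
    by (simp add: gram_scaled_weights matrix_vector_mult_scaleR
        scaleR_matrix_vector_assoc[symmetric])
qed

lemma est_scaled_weights:
  fixes H :: "'m::finite \<Rightarrow> real^'n::finite"
  assumes "\<forall>i. s i > 0" "full_col_rank H R" "t > 0"
  shows "est H (\<lambda>i. t * s i) R z = est H s R z"
proof -
  have "(\<Sum>i\<in>R. (z i / (t * s i)) *\<^sub>R H i) = (1 / t) *\<^sub>R (\<Sum>i\<in>R. (z i / s i) *\<^sub>R H i)"
    unfolding scaleR_sum_right by (intro sum.cong) auto
  then show ?thesis
    using assms(3) unfolding est_def matrix_inv_gram_scaled_weights[OF assms]
    by (simp add: matrix_vector_mult_scaleR)
qed

lemma Jstat_scaled_weights: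
  fixes H :: "'m::finite \<Rightarrow> real^'n::finite"
  assumes "\<forall>i. s i > 0" "full_col_rank H R" "t > 0"
  shows "Jstat H (\<lambda>i. t * s i) R z = Jstat H s R z / t"
  unfolding Jstat_def resid_def est_scaled_weights[OF assms] sum_divide_distrib
  by (intro sum.cong) auto

lemma nresid_scaled_weights:
  fixes H :: "'m::finite \<Rightarrow> real^'n::finite"
  assumes "\<forall>i. s i > 0" "full_col_rank H R" "t > 0"
  shows "nresid H (\<lambda>i. t * s i) R z j = nresid H s R z j / sqrt t"
proof -
  have "WSigma_diag H (\<lambda>i. t * s i) R j = t * WSigma_diag H s R j"
    unfolding WSigma_diag_def matrix_inv_gram_scaled_weights[OF assms]
    by (simp add: right_diff_distrib)
  then show ?thesis
    unfolding nresid_def omega_def resid_def est_scaled_weights[OF assms]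
    by (simp add: real_sqrt_mult)
qed

section \<open>Runs of the iterative estimator\<close>

definition largest_nresid ::
    "('m \<Rightarrow> real^'n::finite) \<Rightarrow> ('m \<Rightarrow> real) \<Rightarrow> 'm set \<Rightarrow> ('m \<Rightarrow> real) \<Rightarrow> 'm \<Rightarrow> bool" where
  "largest_nresid H s R z i \<longleftrightarrow> (\<forall>j\<in>R. \<bar>nresid H s R z j\<bar> \<le> \<bar>nresid H s R z i\<bar>)"

lemma largest_nresid_add_state_scaled_weights:
  fixes H :: "'m::finite \<Rightarrow> real^'n::finite"
  assumes "\<forall>i. s i > 0" "full_col_rank H R" "t > 0"
  shows "largest_nresid H (\<lambda>i. t * s i) R (\<lambda>i. H i \<bullet> x + z i) i \<longleftrightarrow> largest_nresid H s R z i"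
  using assms(3)
  unfolding largest_nresid_def nresid_scaled_weights[OF assms] nresid_add_state[OF assms(1,2)]
  by (simp add: abs_divide divide_le_cancel)

lemma ise_run_subset: "ise_run H s good z k R N Rf \<Longrightarrow> Rf \<subseteq> R"
  by (induction rule: ise_run.induct) auto

lemma ise_run_final_good: "ise_run H s good z k R N Rf \<Longrightarrow> good N (Jstat H s Rf z)"
  by (induction rule: ise_run.induct) auto

lemma full_col_rank_remove_largest_nresid:
  fixes H :: "'m::finite \<Rightarrow> real^'n::finite"
  assumes s: "\<forall>i. s i > 0" and rank: "full_col_rank H R" and J: "Jstat H s R z \<noteq> 0"
    and i: "i \<in> R" and largest: "largest_nresid H s R z i"
  shows "full_col_rank H (R - {i})"
proof (rule ccontr)
  assume "\<not> ?thesis"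
  then have "nresid H s R z i = 0"
    using full_col_rank_remove_iff_not_critical[OF rank i] by (simp add: nresid_def omega_def)
  then have all0: "\<forall>j\<in>R. nresid H s R z j = 0"
    using largest unfolding largest_nresid_def by fastforce
  obtain j where j: "j \<in> R" "resid H s R z j \<noteq> 0"
    using J Jstat_eq_0_iff[OF s] by blast
  then have "\<not> critical_set H R {j}"
    using resid_critical_eq_0[OF s rank] by blast
  then have "nresid H s R z j \<noteq> 0"
    using WSigma_diag_nonzero[OF s rank j(1)] j(2) by (simp add: nresid_def omega_def)
  then show False
    using all0 j(1) by blast
qed

text \<open>Only iterations k \<le> K are ever reached from k + card R \<le> K, so hypothesis no_stop
  concerns finitely many thresholds.\<close>

lemma ise_run_within_noiseless_run:
  fixes H :: "'m::finite \<Rightarrow> real^'n::finite"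
  assumes run: "ise_run H s' good z k R N Rf"
    and w: "\<forall>i. w i > 0" and rank: "full_col_rank H R" and counter: "k + card R \<le> K"
    and no_stop: "\<And>k R. full_col_rank H R \<Longrightarrow> Jstat H w R a \<noteq> 0 \<Longrightarrow> k \<le> K
        \<Longrightarrow> \<not> good k (Jstat H s' R z)"
    and same_choice: "\<And>R i. full_col_rank H R \<Longrightarrow> Jstat H w R a \<noteq> 0 \<Longrightarrow> i \<in> R
        \<Longrightarrow> largest_nresid H s' R z i \<Longrightarrow> largest_nresid H w R a i"
  shows "\<exists>N' R'. ise_run H w (\<lambda>k v. v = 0) a k R N' R' \<and> Rf \<subseteq> R'"
  using run rank counter
proof (induction rule: ise_run.induct)
  case (stop k R)
  then have "Jstat H w R a = 0"
    using no_stop by fastforce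
  then show ?case
    by (blast intro: ise_run.stop)
next
  case (remove k R i N Rf)
  show ?case
  proof (cases "Jstat H w R a = 0")
    case True
    then show ?thesis
      using ise_run_subset[OF remove.hyps(4)] by (blast intro: ise_run.stop)
  next
    case False
    have largest: "largest_nresid H w R a i"
      using same_choice[OF remove.prems(1) False remove.hyps(2)] remove.hyps(3)
      unfolding largest_nresid_def by blast
    have "full_col_rank H (R - {i})"
      using full_col_rank_remove_largest_nresid[OF w remove.prems(1) False remove.hyps(2)] largest
      by blast
    moreover have "Suc k + card (R - {i}) \<le> K"
      using remove.prems(2) remove.hyps(2) card_gt_0_iff[of R] by (auto simp: card_Diff_singleton)
    ultimately obtain N' R' where "ise_run H w (\<lambda>k v. v = 0) a (Suc k) (R - {i}) N' R'" "Rf \<subseteq> R'"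
      using remove.IH by blast
    then show ?thesis
      using False remove.hyps(2) largest unfolding largest_nresid_def
      by (blast intro: ise_run.remove)
  qed
qed

section \<open>Small noise\<close>

lemma eventually_at_right_0_less:
  fixes c :: real
  assumes "c > 0"
  shows "\<forall>\<^sub>F d in at_right 0. d < c"
  using order_tendstoD(2)[OF tendsto_ident_at assms] .

lemma resid_eventually_small:
  assumes "\<epsilon> > 0"
  shows "\<forall>\<^sub>F d in at_right 0. \<forall>e. (\<forall>i. \<bar>e i\<bar> < d) \<longrightarrow> \<bar>resid H s R e j\<bar> < \<epsilon>"
proof -
  define c where "c i = H j \<bullet> (matrix_inv (gram H s R) *v H i) / s i" for i
  define C where "C = 1 + (\<Sum>i\<in>R. \<bar>c i\<bar>)"
  have bound: "\<bar>resid H s R e j\<bar> \<le> C * d" if e: "\<forall>i. \<bar>e i\<bar> < d" for e d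
  proof -
    have "resid H s R e j = e j - (\<Sum>i\<in>R. e i * c i)"
      unfolding resid_def inner_est_eq_sum c_def by simp
    then have "\<bar>resid H s R e j\<bar> \<le> \<bar>e j\<bar> + \<bar>\<Sum>i\<in>R. e i * c i\<bar>"
      by (simp add: abs_triangle_ineq4)
    also have "\<dots> \<le> \<bar>e j\<bar> + (\<Sum>i\<in>R. \<bar>e i\<bar> * \<bar>c i\<bar>)"
      using sum_abs[of "\<lambda>i. e i * c i" R] by (simp add: abs_mult)
    also have "\<dots> \<le> d + (\<Sum>i\<in>R. d * \<bar>c i\<bar>)"
      using e by (intro add_mono sum_mono mult_right_mono) (auto intro: less_imp_le)
    finally show ?thesis
      by (simp add: C_def sum_distrib_left algebra_simps)
  qed
  have "((\<lambda>d. C * d) \<longlongrightarrow> C * 0) (at_right (0::real))"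
    by (intro tendsto_intros)
  then have "\<forall>\<^sub>F d in at_right 0. C * d < \<epsilon>"
    using assms by (simp add: order_tendstoD(2))
  then show ?thesis
    by eventually_elim (use bound in \<open>blast intro: order_le_less_trans\<close>)
qed

lemma nresid_eventually_small:
  assumes "\<epsilon> > 0"
  shows "\<forall>\<^sub>F d in at_right 0. \<forall>e. (\<forall>i. \<bar>e i\<bar> < d) \<longrightarrow> \<bar>nresid H s R e j\<bar> < \<epsilon>"
proof -
  define \<omega> where "\<omega> = \<bar>omega H s R j\<bar>"
  have "\<omega> \<ge> 0" "\<omega> * (\<epsilon> / (\<omega> + 1)) < \<epsilon>"
    using assms by (simp_all add: \<omega>_def field_simps)
  moreover have "\<forall>\<^sub>F d in at_right 0. \<forall>e. (\<forall>i. \<bar>e i\<bar> < d) \<longrightarrow> \<bar>resid H s R e j\<bar> < \<epsilon> / (\<omega> + 1)"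
    using assms by (intro resid_eventually_small) (simp add: \<omega>_def)
  ultimately show ?thesis
    unfolding nresid_def abs_mult \<omega>_def[symmetric]
    by (elim eventually_mono) (metis order_le_less_trans mult_left_mono less_imp_le)
qed

text \<open>A strict gap |v i| < |v j| survives as |u i| < |u j| once the perturbation is below
  half of |\<eta>| times the smallest such gap.\<close>

lemma abs_argmax_perturbation:
  fixes v :: "'a \<Rightarrow> real"
  assumes R: "finite R" and \<eta>: "\<eta> \<noteq> 0"
  shows "\<forall>\<^sub>F \<delta> in at_right 0. \<forall>u. (\<forall>j\<in>R. \<bar>u j - \<eta> * v j\<bar> < \<delta>) \<longrightarrow>
           (\<forall>i\<in>R. (\<forall>j\<in>R. \<bar>u j\<bar> \<le> \<bar>u i\<bar>) \<longrightarrow> (\<forall>j\<in>R. \<bar>v j\<bar> \<le> \<bar>v i\<bar>))"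
proof -
  have "\<forall>\<^sub>F \<delta> in at_right 0. \<forall>p\<in>R \<times> R.
          \<bar>v (fst p)\<bar> < \<bar>v (snd p)\<bar> \<longrightarrow> 2 * \<delta> < \<bar>\<eta>\<bar> * (\<bar>v (snd p)\<bar> - \<bar>v (fst p)\<bar>)"
  proof (intro eventually_ball_finite ballI)
    fix p assume "p \<in> R \<times> R"
    show "\<forall>\<^sub>F \<delta> in at_right 0.
            \<bar>v (fst p)\<bar> < \<bar>v (snd p)\<bar> \<longrightarrow> 2 * \<delta> < \<bar>\<eta>\<bar> * (\<bar>v (snd p)\<bar> - \<bar>v (fst p)\<bar>)"
    proof (cases "\<bar>v (fst p)\<bar> < \<bar>v (snd p)\<bar>")
      case True
      then have "\<bar>\<eta>\<bar> * (\<bar>v (snd p)\<bar> - \<bar>v (fst p)\<bar>) / 2 > 0"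
        using \<eta> by simp
      then show ?thesis
        by (rule eventually_mono[OF eventually_at_right_0_less]) simp
    qed simp
  qed (use R in simp)
  then show ?thesis
  proof eventually_elim
    case (elim \<delta>)
    show ?case
    proof (intro allI impI ballI)
      fix u i j
      assume close: "\<forall>j\<in>R. \<bar>u j - \<eta> * v j\<bar> < \<delta>" and i: "i \<in> R"
        and max: "\<forall>j\<in>R. \<bar>u j\<bar> \<le> \<bar>u i\<bar>" and j: "j \<in> R"
      show "\<bar>v j\<bar> \<le> \<bar>v i\<bar>"
      proof (rule ccontr)
        assume "\<not> ?thesis"
        then have "2 * \<delta> < \<bar>\<eta>\<bar> * \<bar>v j\<bar> - \<bar>\<eta>\<bar> * \<bar>v i\<bar>"
          using elim i j by (force simp: right_diff_distrib)
        moreover have "\<bar>\<eta>\<bar> * \<bar>v j\<bar> < \<bar>u j\<bar> + \<delta>" "\<bar>u i\<bar> < \<bar>\<eta>\<bar> * \<bar>v i\<bar> + \<delta>"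
          using close i j by (auto simp: abs_mult[symmetric])
        ultimately show False
          using max j by fastforce
      qed
    qed
  qed
qed

lemma small_noise_tracks_residue:
  fixes H :: "'m::finite \<Rightarrow> real^'n::finite"
  assumes s: "\<forall>i. s i > 0" and J: "Jstat H s R a \<noteq> 0" and \<eta>: "\<eta> \<noteq> 0"
  shows "\<forall>\<^sub>F d in at_right 0. \<forall>e. (\<forall>i. \<bar>e i\<bar> < d) \<longrightarrow>
           d \<le> Jstat H s R (\<lambda>i. e i + \<eta> * a i) \<and>
           (\<forall>i\<in>R. largest_nresid H s R (\<lambda>i. e i + \<eta> * a i) i \<longrightarrow> largest_nresid H s R a i)"
proof -
  obtain j0 where j0: "j0 \<in> R" "resid H s R a j0 \<noteq> 0"
    using J Jstat_eq_0_iff[OF s] by blast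
  define c where "c = \<bar>\<eta> * resid H s R a j0\<bar> / 2"
  have c: "c > 0"
    using \<eta> j0(2) by (simp add: c_def)
  have J_bound: "c\<^sup>2 / s j0 \<le> Jstat H s R (\<lambda>i. e i + \<eta> * a i)"
    if "\<bar>resid H s R e j0\<bar> < c" for e :: "'m \<Rightarrow> real"
  proof -
    have "c \<le> \<bar>resid H s R (\<lambda>i. e i + \<eta> * a i) j0\<bar>"
      using that unfolding resid_add resid_mult c_def by linarith
    then have "c\<^sup>2 / s j0 \<le> (resid H s R (\<lambda>i. e i + \<eta> * a i) j0)\<^sup>2 / s j0"
      using c s abs_le_square_iff[of c "resid H s R (\<lambda>i. e i + \<eta> * a i) j0"]
      by (intro divide_right_mono) (auto intro: less_imp_le)
    also have "\<dots> \<le> Jstat H s R (\<lambda>i. e i + \<eta> * a i)"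
      unfolding Jstat_def using s by (intro member_le_sum[OF j0(1)]) (auto intro: divide_nonneg_pos)
    finally show ?thesis .
  qed
  obtain \<delta> where \<delta>: "\<delta> > 0" and perturb: "\<forall>u. (\<forall>j\<in>R. \<bar>u j - \<eta> * nresid H s R a j\<bar> < \<delta>) \<longrightarrow>
      (\<forall>i\<in>R. (\<forall>j\<in>R. \<bar>u j\<bar> \<le> \<bar>u i\<bar>) \<longrightarrow> (\<forall>j\<in>R. \<bar>nresid H s R a j\<bar> \<le> \<bar>nresid H s R a i\<bar>))"
    using eventually_happens'[OF _ eventually_conj[OF eventually_at_right_less
          abs_argmax_perturbation[OF finite \<eta>, of R "nresid H s R a"]]]
    by auto
  have "\<forall>\<^sub>F d in at_right 0. (\<forall>e. (\<forall>i. \<bar>e i\<bar> < d) \<longrightarrow> \<bar>resid H s R e j0\<bar> < c)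
      \<and> d < c\<^sup>2 / s j0 \<and> (\<forall>j\<in>R. \<forall>e. (\<forall>i. \<bar>e i\<bar> < d) \<longrightarrow> \<bar>nresid H s R e j\<bar> < \<delta>)"
    using c s \<delta>
    by (intro eventually_conj resid_eventually_small eventually_at_right_0_less
        eventually_ball_finite ballI nresid_eventually_small) auto
  then show ?thesis
  proof eventually_elim
    case (elim d)
    show ?case
    proof (intro allI impI conjI ballI)
      fix e :: "'m \<Rightarrow> real" assume e: "\<forall>i. \<bar>e i\<bar> < d"
      have "\<bar>resid H s R e j0\<bar> < c"
        using elim e by blast
      then show "d \<le> Jstat H s R (\<lambda>i. e i + \<eta> * a i)"
        using J_bound elim by (meson less_imp_le order_trans)
      have close: "\<forall>j\<in>R. \<bar>nresid H s R (\<lambda>i. e i + \<eta> * a i) j - \<eta> * nresid H s R a j\<bar> < \<delta>"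
        using elim e by (simp add: nresid_add nresid_mult)
      fix i assume "i \<in> R" "largest_nresid H s R (\<lambda>i. e i + \<eta> * a i) i"
      then show "largest_nresid H s R a i"
        using perturb close unfolding largest_nresid_def by blast
    qed
  qed
qed

lemma small_noise_tracks_all_residues:
  fixes H :: "'m::finite \<Rightarrow> real^'n::finite"
  assumes w: "\<forall>i. w i > 0" and \<eta>: "\<eta> \<noteq> 0"
  obtains d where "d > 0"
    and "\<And>R e. full_col_rank H R \<Longrightarrow> Jstat H w R a \<noteq> 0 \<Longrightarrow> \<forall>i. \<bar>e i\<bar> < d \<Longrightarrow>
      d \<le> Jstat H w R (\<lambda>i. e i + \<eta> * a i) \<and>
      (\<forall>i\<in>R. largest_nresid H w R (\<lambda>i. e i + \<eta> * a i) i \<longrightarrow> largest_nresid H w R a i)"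
proof -
  let ?F = "{R. full_col_rank H R \<and> Jstat H w R a \<noteq> 0}"
  have "\<forall>\<^sub>F d in at_right 0. 0 < d \<and> (\<forall>R\<in>?F. \<forall>e. (\<forall>i. \<bar>e i\<bar> < d) \<longrightarrow>
           d \<le> Jstat H w R (\<lambda>i. e i + \<eta> * a i) \<and>
           (\<forall>i\<in>R. largest_nresid H w R (\<lambda>i. e i + \<eta> * a i) i \<longrightarrow> largest_nresid H w R a i))"
    using w \<eta>
    by (intro eventually_conj eventually_at_right_less eventually_ball_finite ballI
        small_noise_tracks_residue) auto
  then obtain d where "0 < d" and "\<forall>R\<in>?F. \<forall>e. (\<forall>i. \<bar>e i\<bar> < d) \<longrightarrow>
      d \<le> Jstat H w R (\<lambda>i. e i + \<eta> * a i) \<and>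
      (\<forall>i\<in>R. largest_nresid H w R (\<lambda>i. e i + \<eta> * a i) i \<longrightarrow> largest_nresid H w R a i)"
    using eventually_happens'[OF trivial_limit_at_right_real] by blast
  then show ?thesis
    by (intro that) auto
qed

lemma bounded_on_atMost:
  fixes f :: "nat \<Rightarrow> real"
  obtains T where "T \<ge> 0" "\<And>k. k \<le> K \<Longrightarrow> f k \<le> T"
proof
  show "(\<Sum>k\<le>K. \<bar>f k\<bar>) \<ge> 0"
    by (simp add: sum_nonneg)
  fix k assume "k \<le> K"
  then have "\<bar>f k\<bar> \<le> (\<Sum>k\<le>K. \<bar>f k\<bar>)"
    by (intro member_le_sum) auto
  then show "f k \<le> (\<Sum>k\<le>K. \<bar>f k\<bar>)"
    by linarith
qed

text \<open>Here \<sigma> is the variance scale.  With the noise below d and \<sigma> < d / (T + 1), where T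
  bounds the thresholds of the first K iterations, the statistic J / \<sigma> \<ge> d / \<sigma> exceeds
  every such threshold as long as the noiseless residue is non-zero.\<close>

lemma small_noise_run_within_noiseless_run:
  fixes H :: "'m::finite \<Rightarrow> real^'n::finite"
  assumes w: "\<forall>i. w i > 0" and obs: "full_col_rank H UNIV" and \<eta>: "\<eta> \<noteq> 0"
  shows "\<exists>d>0. \<exists>t0>0. \<forall>\<sigma> e N Rf. 0 < \<sigma> \<longrightarrow> \<sigma> < t0 \<longrightarrow> (\<forall>i. \<bar>e i\<bar> < d) \<longrightarrow>
     noisy_run H w \<sigma> tau (\<lambda>i. H i \<bullet> x + e i + \<eta> * a i) N Rf \<longrightarrow>
     (\<exists>N' R'. noiseless_run H w a N' R' \<and> Rf \<subseteq> R')"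
proof -
  obtain d where d: "d > 0" and track: "\<And>R e. full_col_rank H R \<Longrightarrow> Jstat H w R a \<noteq> 0 \<Longrightarrow>
      \<forall>i. \<bar>e i\<bar> < d \<Longrightarrow> d \<le> Jstat H w R (\<lambda>i. e i + \<eta> * a i) \<and>
      (\<forall>i\<in>R. largest_nresid H w R (\<lambda>i. e i + \<eta> * a i) i \<longrightarrow> largest_nresid H w R a i)"
    using small_noise_tracks_all_residues[where H = H and a = a, OF w \<eta>] by blast
  define K where "K = Suc CARD('m)"
  obtain T where T: "T \<ge> 0" and tau_le: "\<And>k. k \<le> K \<Longrightarrow> tau k \<le> T"
    using bounded_on_atMost by blast
  show ?thesis
  proof (rule exI[of _ d], intro conjI d exI[of _ "d / (T + 1)"] allI impI)
    show "d / (T + 1) > 0"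
      using d T by simp
    fix \<sigma> :: real and e :: "'m \<Rightarrow> real" and N Rf
    assume \<sigma>: "0 < \<sigma>" "\<sigma> < d / (T + 1)" and e: "\<forall>i. \<bar>e i\<bar> < d"
      and run: "noisy_run H w \<sigma> tau (\<lambda>i. H i \<bullet> x + e i + \<eta> * a i) N Rf"
    have \<sigma>T: "\<sigma> * T < d"
      using \<sigma> T by (simp add: pos_less_divide_eq distrib_left)
    have z: "(\<lambda>i. H i \<bullet> x + e i + \<eta> * a i) = (\<lambda>i. H i \<bullet> x + (e i + \<eta> * a i))"
      by (simp add: add.assoc)
    have "\<exists>N' R'. ise_run H w (\<lambda>k v. v = 0) a 1 UNIV N' R' \<and> Rf \<subseteq> R'"
    proof (rule ise_run_within_noiseless_run[OF run[unfolded noisy_run_def] w obs])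
      show "1 + card (UNIV :: 'm set) \<le> K"
        by (simp add: K_def)
      fix k R assume R: "full_col_rank H R" "Jstat H w R a \<noteq> 0"
      show "k \<le> K \<Longrightarrow> \<not> Jstat H (\<lambda>i. \<sigma> * w i) R (\<lambda>i. H i \<bullet> x + e i + \<eta> * a i) \<le> tau k"
      proof -
        assume "k \<le> K"
        have "d / \<sigma> \<le> Jstat H w R (\<lambda>i. e i + \<eta> * a i) / \<sigma>"
          using track[OF R e] \<sigma>(1) by (simp add: divide_right_mono)
        moreover have "T < d / \<sigma>"
          using \<sigma>T \<sigma>(1) by (simp add: pos_less_divide_eq mult.commute)
        ultimately show ?thesis
          using tau_le[OF \<open>k \<le> K\<close>] unfolding z Jstat_scaled_weights[OF w R(1) \<sigma>(1)]
            Jstat_add_state[OF w R(1)] by linarith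
      qed
      fix i assume "i \<in> R" "largest_nresid H (\<lambda>i. \<sigma> * w i) R (\<lambda>i. H i \<bullet> x + e i + \<eta> * a i) i"
      then show "largest_nresid H w R a i"
        using track[OF R e] unfolding z largest_nresid_add_state_scaled_weights[OF w R(1) \<sigma>(1)]
        by blast
    qed
    then show "\<exists>N' R'. noiseless_run H w a N' R' \<and> Rf \<subseteq> R'"
      unfolding noiseless_run_def .
  qed
qed

section \<open>Measurability\<close>

lemma resid_measurable [measurable]:
  assumes [measurable]: "\<And>i. (\<lambda>e. z e i) \<in> borel_measurable M"
  shows "(\<lambda>e. resid H s R (z e) j) \<in> borel_measurable M"
  unfolding resid_def inner_est_eq_sum by measurable

lemma Jstat_measurable [measurable]:
  assumes [measurable]: "\<And>i. (\<lambda>e. z e i) \<in> borel_measurable M"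
  shows "(\<lambda>e. Jstat H s R (z e)) \<in> borel_measurable M"
  unfolding Jstat_def by measurable

lemma nresid_measurable [measurable]:
  assumes [measurable]: "\<And>i. (\<lambda>e. z e i) \<in> borel_measurable M"
  shows "(\<lambda>e. nresid H s R (z e) j) \<in> borel_measurable M"
  unfolding nresid_def by measurable

lemma ise_run_all_iff:
  "(\<forall>N Rf. ise_run H s good z k R N Rf \<longrightarrow> P Rf) \<longleftrightarrow>
     (good k (Jstat H s R z) \<longrightarrow> P R) \<and>
     (\<not> good k (Jstat H s R z) \<longrightarrow>
        (\<forall>i\<in>R. largest_nresid H s R z i \<longrightarrow>
           (\<forall>N Rf. ise_run H s good z (Suc k) (R - {i}) N Rf \<longrightarrow> P Rf)))"
  (is "?all \<longleftrightarrow> ?step")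
proof
  assume ?all
  then show ?step
    unfolding largest_nresid_def by (blast intro: ise_run.intros)
next
  assume step: ?step
  show ?all
  proof (intro allI impI)
    fix N Rf
    assume "ise_run H s good z k R N Rf"
    then show "P Rf"
      by (cases rule: ise_run.cases) (use step in \<open>auto simp: largest_nresid_def\<close>)
  qed
qed

lemma largest_nresid_pred [measurable]:
  fixes H :: "'m::finite \<Rightarrow> real^'n::finite"
  assumes [measurable]: "\<And>i. (\<lambda>e. z e i) \<in> borel_measurable M"
  shows "Measurable.pred M (\<lambda>e. largest_nresid H s R (z e) i)"
  unfolding largest_nresid_def by measurable

lemma Jstat_le_pred [measurable]:
  assumes [measurable]: "\<And>i. (\<lambda>e. z e i) \<in> borel_measurable M"
  shows "Measurable.pred M (\<lambda>e. Jstat H s R (z e) \<le> c)"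
  by measurable

lemma ise_run_outcome_pred:
  fixes H :: "'m::finite \<Rightarrow> real^'n::finite"
  assumes z: "\<And>i. (\<lambda>e. z e i) \<in> borel_measurable M"
  shows "Measurable.pred M (\<lambda>e. \<forall>N Rf. ise_run H s (\<lambda>k v. v \<le> tau k) (z e) k R N Rf \<longrightarrow> P Rf)"
proof (induction "card R" arbitrary: R k rule: less_induct)
  case less
  have IH: "Measurable.pred M (\<lambda>e. \<forall>N Rf.
      ise_run H s (\<lambda>k v. v \<le> tau k) (z e) (Suc k) (R - {i}) N Rf \<longrightarrow> P Rf)"
    if "i \<in> R" for i
    using that by (intro less card_Diff1_less finite)
  show ?case
    unfolding ise_run_all_iff[of H s "\<lambda>k v. v \<le> tau k" "z e" k R P for e]
    by (intro pred_intros_logic(2,3,4) pred_intros_finite(3)[OF finite] Jstat_le_pred[OF z] IH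
        largest_nresid_pred[OF z]) (simp_all add: pred_def)
qed

section \<open>Gaussian noise\<close>

lemma prob_space_noise_measure:
  assumes "\<forall>i. w i > 0" "\<sigma> > 0"
  shows "prob_space (noise_measure w \<sigma>)"
  unfolding noise_measure_def
  by (rule prob_space_PiM, rule prob_space_normal_density) (use assms in simp)

lemma space_noise_measure: "space (noise_measure w \<sigma>) = UNIV"
  by (simp add: noise_measure_def space_PiM)

lemma noise_component_measurable [measurable]:
  "(\<lambda>e. e i) \<in> borel_measurable (noise_measure w \<sigma>)"
proof -
  have "(\<lambda>e. e i) \<in> noise_measure w \<sigma> \<rightarrow>\<^sub>M density lborel (normal_density 0 (sqrt (\<sigma> * w i)))"
    unfolding noise_measure_def by (rule measurable_component_singleton) simp
  then show ?thesis
    by (simp add: measurable_def space_noise_measure)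
qed

lemma normal_density_tail_le:
  fixes \<sigma> \<delta> :: real
  assumes \<sigma>: "\<sigma> > 0" and \<delta>: "\<delta> > 0"
  shows "measure (density lborel (normal_density 0 \<sigma>)) {x. \<delta> \<le> \<bar>x\<bar>} \<le> \<sigma>\<^sup>2 / \<delta>\<^sup>2"
proof -
  let ?N = "density lborel (normal_density 0 \<sigma>)"
  interpret N: prob_space ?N
    by (rule prob_space_normal_density[OF \<sigma>])
  have "integrable lborel (\<lambda>x. normal_density 0 \<sigma> x * x\<^sup>2)"
    using integrable_normal_moment[OF \<sigma>, of 0 2] by simp
  then have integrable: "integrable lborel (\<lambda>x. normal_density 0 \<sigma> x * x\<^sup>2 / \<delta>\<^sup>2)"
    by (rule integrable_divide)
  have pointwise: "ennreal (normal_density 0 \<sigma> x) * indicator {x. \<delta> \<le> \<bar>x\<bar>} x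
      \<le> ennreal (normal_density 0 \<sigma> x * x\<^sup>2 / \<delta>\<^sup>2)" for x :: real
  proof (cases "\<delta> \<le> \<bar>x\<bar>")
    case True
    then have "\<delta>\<^sup>2 \<le> x\<^sup>2"
      using \<delta> by (metis abs_le_square_iff abs_of_pos)
    then have "1 \<le> x\<^sup>2 / \<delta>\<^sup>2"
      using \<delta> by simp
    then have "normal_density 0 \<sigma> x \<le> normal_density 0 \<sigma> x * (x\<^sup>2 / \<delta>\<^sup>2)"
      using mult_left_mono[of 1 "x\<^sup>2 / \<delta>\<^sup>2" "normal_density 0 \<sigma> x"] by simp
    with True show ?thesis
      by (simp add: ennreal_leI)
  qed simp
  have "emeasure ?N {x. \<delta> \<le> \<bar>x\<bar>}
      = (\<integral>\<^sup>+x. ennreal (normal_density 0 \<sigma> x) * indicator {x. \<delta> \<le> \<bar>x\<bar>} x \<partial>lborel)"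
    by (simp add: emeasure_density nn_integral_set_ennreal)
  also have "\<dots> \<le> (\<integral>\<^sup>+x. ennreal (normal_density 0 \<sigma> x * x\<^sup>2 / \<delta>\<^sup>2) \<partial>lborel)"
    by (intro nn_integral_mono pointwise)
  also have "\<dots> = ennreal (\<integral>x. normal_density 0 \<sigma> x * x\<^sup>2 / \<delta>\<^sup>2 \<partial>lborel)"
    using integrable by (intro nn_integral_eq_integral) auto
  also have "\<dots> = ennreal (\<sigma>\<^sup>2 / \<delta>\<^sup>2)"
    using integral_normal_moment_even[OF \<sigma>, of 0 1] by (simp add: power2_eq_square)
  finally show ?thesis
    using N.emeasure_eq_measure by (simp add: ennreal_le_iff[symmetric] del: ennreal_le_iff)
qed

lemma measure_noise_measure_box:
  fixes w :: "'m::finite \<Rightarrow> real"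
  assumes w: "\<forall>i. w i > 0" and \<sigma>: "\<sigma> > 0"
  shows "measure (noise_measure w \<sigma>) {e. \<forall>i. \<bar>e i\<bar> < \<delta>}
      = (\<Prod>i\<in>UNIV. measure (density lborel (normal_density 0 (sqrt (\<sigma> * w i)))) {x. \<bar>x\<bar> < \<delta>})"
proof -
  let ?M = "\<lambda>i. density lborel (normal_density 0 (sqrt (\<sigma> * w i)))"
  have P: "prob_space (?M i)" for i
    by (rule prob_space_normal_density) (use w \<sigma> in simp)
  have box: "prod_emb UNIV ?M UNIV (Pi\<^sub>E UNIV (\<lambda>i. {x. \<bar>x\<bar> < \<delta>})) = {e. \<forall>i. \<bar>e i\<bar> < \<delta>}"
    by (auto simp: prod_emb_def space_PiM PiE_iff)
  have "emeasure (noise_measure w \<sigma>) {e. \<forall>i. \<bar>e i\<bar> < \<delta>}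
      = (\<Prod>i\<in>UNIV. emeasure (?M i) {x. \<bar>x\<bar> < \<delta>})"
    unfolding noise_measure_def box[symmetric]
    by (rule emeasure_PiM_emb) (use P in auto)
  also have "\<dots> = ennreal (\<Prod>i\<in>UNIV. measure (?M i) {x. \<bar>x\<bar> < \<delta>})"
    by (simp add: finite_measure.emeasure_eq_measure[OF prob_space.axioms(1)[OF P]] prod_ennreal)
  finally show ?thesis
    using finite_measure.emeasure_eq_measure
      [OF prob_space.axioms(1)[OF prob_space_noise_measure[OF w \<sigma>]]]
    by (simp add: prod_nonneg)
qed

lemma noise_measure_box_tendsto_1:
  fixes w :: "'m::finite \<Rightarrow> real"
  assumes w: "\<forall>i. w i > 0" and \<delta>: "\<delta> > 0"
  shows "((\<lambda>\<sigma>. measure (noise_measure w \<sigma>) {e. \<forall>i. \<bar>e i\<bar> < \<delta>}) \<longlongrightarrow> 1) (at_right 0)"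
proof -
  let ?f = "\<lambda>i \<sigma>. measure (density lborel (normal_density 0 (sqrt (\<sigma> * w i)))) {x. \<bar>x\<bar> < \<delta>}"
  have factor_bounds: "1 - \<sigma> * w i / \<delta>\<^sup>2 \<le> ?f i \<sigma> \<and> ?f i \<sigma> \<le> 1" if \<sigma>: "\<sigma> > 0" for i \<sigma>
  proof -
    let ?N = "density lborel (normal_density 0 (sqrt (\<sigma> * w i)))"
    have sd: "sqrt (\<sigma> * w i) > 0"
      using w \<sigma> by simp
    interpret N: prob_space ?N
      by (rule prob_space_normal_density[OF sd])
    have "{x. \<bar>x\<bar> < \<delta>} = UNIV - {x. \<delta> \<le> \<bar>x\<bar>}"
      by auto
    then have "?f i \<sigma> = 1 - measure ?N {x. \<delta> \<le> \<bar>x\<bar>}"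
      using N.prob_compl[of "{x. \<delta> \<le> \<bar>x\<bar>}"] by simp
    moreover have "measure ?N {x. \<delta> \<le> \<bar>x\<bar>} \<le> \<sigma> * w i / \<delta>\<^sup>2"
      using normal_density_tail_le[OF sd \<delta>] w \<sigma> by (simp add: less_imp_le)
    ultimately show ?thesis
      using N.prob_le_1 by simp
  qed
  have "(?f i \<longlongrightarrow> 1) (at_right 0)" for i
  proof (rule tendsto_sandwich)
    show "\<forall>\<^sub>F \<sigma> in at_right 0. 1 - \<sigma> * w i / \<delta>\<^sup>2 \<le> ?f i \<sigma>"
      "\<forall>\<^sub>F \<sigma> in at_right 0. ?f i \<sigma> \<le> 1"
      using eventually_at_right_less[of 0] by (auto elim!: eventually_mono simp: factor_bounds)
    have "((\<lambda>\<sigma>. 1 - \<sigma> * w i / \<delta>\<^sup>2) \<longlongrightarrow> 1 - 0 * w i / \<delta>\<^sup>2) (at_right 0)"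
      using \<delta> by (intro tendsto_intros) simp
    then show "((\<lambda>\<sigma>. 1 - \<sigma> * w i / \<delta>\<^sup>2) \<longlongrightarrow> 1) (at_right 0)"
      by simp
  qed simp
  then have "((\<lambda>\<sigma>. \<Prod>i\<in>UNIV. ?f i \<sigma>) \<longlongrightarrow> (\<Prod>i\<in>(UNIV::'m set). 1)) (at_right 0)"
    by (intro tendsto_prod)
  then show ?thesis
    by (simp only: prod.neutral_const, elim Lim_transform_eventually)
       (use eventually_at_right_less[of 0] in
         \<open>auto elim!: eventually_mono simp: measure_noise_measure_box[OF w]\<close>)
qed

lemma noise_measure_tendsto_1:
  fixes w :: "'m::finite \<Rightarrow> real"
  assumes w: "\<forall>i. w i > 0" and d: "d > 0" and A: "\<And>\<sigma>. A \<sigma> \<in> sets (noise_measure w \<sigma>)"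
    and box: "\<forall>\<^sub>F \<sigma> in at_right 0. {e. \<forall>i. \<bar>e i\<bar> < d} \<subseteq> A \<sigma>"
  shows "((\<lambda>\<sigma>. measure (noise_measure w \<sigma>) (A \<sigma>)) \<longlongrightarrow> 1) (at_right 0)"
proof (rule tendsto_sandwich[OF _ _ noise_measure_box_tendsto_1[OF w d] tendsto_const])
  show "\<forall>\<^sub>F \<sigma> in at_right 0. measure (noise_measure w \<sigma>) {e. \<forall>i. \<bar>e i\<bar> < d}
      \<le> measure (noise_measure w \<sigma>) (A \<sigma>)"
    using eventually_conj[OF box eventually_at_right_less]
    by eventually_elim
       (use A prob_space_noise_measure[OF w] in
         \<open>blast intro: finite_measure.finite_measure_mono prob_space.axioms(1)\<close>)
  show "\<forall>\<^sub>F \<sigma> in at_right 0. measure (noise_measure w \<sigma>) (A \<sigma>) \<le> 1"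
    using eventually_at_right_less
    by eventually_elim (use prob_space.prob_le_1 prob_space_noise_measure[OF w] in blast)
qed

section \<open>The attack\<close>

lemma noisy_run_outcome_sets:
  fixes H :: "'m::finite \<Rightarrow> real^'n::finite"
  shows "{e. \<forall>N Rf. noisy_run H w \<sigma> tau (\<lambda>i. H i \<bullet> x + e i + \<eta> * a i) N Rf \<longrightarrow> Rf \<subseteq> G}
    \<in> sets (noise_measure w \<sigma>)"
proof -
  have "Measurable.pred (noise_measure w \<sigma>) (\<lambda>e. \<forall>N Rf.
      ise_run H (\<lambda>i. \<sigma> * w i) (\<lambda>k v. v \<le> tau k) (\<lambda>i. H i \<bullet> x + e i + \<eta> * a i) 1 UNIV N Rf
      \<longrightarrow> Rf \<subseteq> G)"
    by (rule ise_run_outcome_pred) measurable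
  then show ?thesis
    using predE by (fastforce simp: noisy_run_def space_noise_measure)
qed

lemma noiseless_run_final_fits:
  fixes H :: "'m::finite \<Rightarrow> real^'n::finite"
  assumes "\<forall>i. w i > 0" "noiseless_run H w a N Rf" "i \<in> Rf"
  shows "a i = H i \<bullet> est H w Rf a"
  using ise_run_final_good[OF assms(2)[unfolded noiseless_run_def]] Jstat_eq_0_iff[OF assms(1)]
    assms(3)
  unfolding resid_def by auto

lemma small_noise_run_fits_shifted_state:
  fixes H :: "'m::finite \<Rightarrow> real^'n::finite"
  assumes w: "\<forall>i. w i > 0" and obs: "full_col_rank H UNIV"
    and y: "\<forall>N Rf. noiseless_run H w a N Rf \<longrightarrow> est H w Rf a = y"
  shows "\<exists>d>0. \<forall>\<^sub>F \<sigma> in at_right 0. {e. \<forall>i. \<bar>e i\<bar> < d} \<subseteq>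
    {e. \<forall>N Rf. noisy_run H w \<sigma> tau (\<lambda>i. H i \<bullet> x + e i + \<eta> * a i) N Rf
          \<longrightarrow> Rf \<subseteq> {i. \<eta> * a i = \<eta> * (H i \<bullet> y)}}"
proof (cases "\<eta> = 0")
  case True
  then show ?thesis
    by (intro exI[of _ 1]) auto
next
  case False
  obtain d t0 where d: "d > 0" and "t0 > 0" and within: "\<forall>\<sigma> e N Rf. 0 < \<sigma> \<longrightarrow> \<sigma> < t0 \<longrightarrow>
      (\<forall>i. \<bar>e i\<bar> < d) \<longrightarrow> noisy_run H w \<sigma> tau (\<lambda>i. H i \<bullet> x + e i + \<eta> * a i) N Rf \<longrightarrow>
      (\<exists>N' R'. noiseless_run H w a N' R' \<and> Rf \<subseteq> R')"
    using small_noise_run_within_noiseless_run[OF w obs False] by blast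
  have "Rf \<subseteq> {i. \<eta> * a i = \<eta> * (H i \<bullet> y)}" if "noiseless_run H w a N' R'" "Rf \<subseteq> R'"
    for N' R' Rf
    using that noiseless_run_final_fits[OF w that(1)] y by auto
  then have "{e. \<forall>i. \<bar>e i\<bar> < d} \<subseteq>
      {e. \<forall>N Rf. noisy_run H w \<sigma> tau (\<lambda>i. H i \<bullet> x + e i + \<eta> * a i) N Rf
          \<longrightarrow> Rf \<subseteq> {i. \<eta> * a i = \<eta> * (H i \<bullet> y)}}" if "0 < \<sigma>" "\<sigma> < t0" for \<sigma>
    using within that by blast
  moreover have "\<forall>\<^sub>F \<sigma> in at_right 0. 0 < \<sigma> \<and> \<sigma> < t0"
    using \<open>t0 > 0\<close> by (auto simp: eventually_at_right_field)
  ultimately show ?thesis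
    using d by (blast intro: eventually_mono)
qed

lemma noisy_run_fits_shifted_state:
  fixes H :: "'m::finite \<Rightarrow> real^'n::finite"
  assumes w: "\<forall>i. w i > 0" and obs: "full_col_rank H UNIV"
    and y: "\<forall>N Rf. noiseless_run H w a N Rf \<longrightarrow> est H w Rf a = y"
  shows "((\<lambda>\<sigma>. measure (noise_measure w \<sigma>)
         {e. \<forall>N Rf. noisy_run H w \<sigma> tau (\<lambda>i. H i \<bullet> x + e i + \<eta> * a i) N Rf
               \<longrightarrow> (\<forall>i\<in>Rf. H i \<bullet> x + e i + \<eta> * a i = H i \<bullet> (x + \<eta> *\<^sub>R y) + e i)})
       \<longlongrightarrow> 1) (at_right 0)"
proof -
  have "(\<forall>i\<in>Rf. H i \<bullet> x + e i + \<eta> * a i = H i \<bullet> (x + \<eta> *\<^sub>R y) + e i)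
      \<longleftrightarrow> Rf \<subseteq> {i. \<eta> * a i = \<eta> * (H i \<bullet> y)}" for Rf and e :: "'m \<Rightarrow> real"
    by (auto simp: inner_add_right)
  moreover obtain d where "d > 0" "\<forall>\<^sub>F \<sigma> in at_right 0. {e. \<forall>i. \<bar>e i\<bar> < d} \<subseteq>
      {e. \<forall>N Rf. noisy_run H w \<sigma> tau (\<lambda>i. H i \<bullet> x + e i + \<eta> * a i) N Rf
            \<longrightarrow> Rf \<subseteq> {i. \<eta> * a i = \<eta> * (H i \<bullet> y)}}"
    using small_noise_run_fits_shifted_state[OF w obs y] by blast
  ultimately show ?thesis
    by (simp only:) (rule noise_measure_tendsto_1[OF w _ noisy_run_outcome_sets])
qed

lemma zero_rows_inner_complement:
  assumes "S1 \<inter> S2 = {}" "\<forall>i. i \<notin> S1 \<union> S2 \<longrightarrow> H i \<bullet> v = 0"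
  shows "zero_rows H S1 i \<bullet> v = H i \<bullet> v - zero_rows H S2 i \<bullet> v"
  using assms unfolding zero_rows_def by auto

theorem theorem2:
  fixes H :: "'m::finite \<Rightarrow> real^'n::finite"
    and w :: "'m \<Rightarrow> real"
    and tau :: "nat \<Rightarrow> real"
    and S1 S2 :: "'m set"
    and dx y :: "real^'n"
  assumes w_pos: "\<forall>i. w i > 0"
    and w_sum: "(\<Sum>i\<in>UNIV. w i) = 1"
    and tau_pos: "\<forall>k. tau k > 0"
    and observable: "full_col_rank H UNIV"
    and crit: "critical_set H UNIV (S1 \<union> S2)"
    and partition: "S1 \<inter> S2 = {}" "S1 \<noteq> {}" "S2 \<noteq> {}"
    and dx_unit: "norm dx = 1"
    and dx_null: "{v. \<forall>i\<in>- (S1 \<union> S2). H i \<bullet> v = 0} = span {dx}"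
    and y_unique: "\<exists>!y'. \<forall>N Rf. noiseless_run H w (\<lambda>i. zero_rows H S2 i \<bullet> dx) N Rf
                          \<longrightarrow> est H w Rf (\<lambda>i. zero_rows H S2 i \<bullet> dx) = y'"
    and y_def: "\<forall>N Rf. noiseless_run H w (\<lambda>i. zero_rows H S2 i \<bullet> dx) N Rf
                          \<longrightarrow> est H w Rf (\<lambda>i. zero_rows H S2 i \<bullet> dx) = y"
  shows "\<forall>(x::real^'n) (eta::real).
     ((\<lambda>sigma2. measure (noise_measure w sigma2)
         {e. \<forall>N Rf. noisy_run H w sigma2 tau
                       (\<lambda>i. H i \<bullet> x + e i + eta * (zero_rows H S2 i \<bullet> dx)) N Rf
               \<longrightarrow> (\<forall>i\<in>Rf. H i \<bullet> x + e i + eta * (zero_rows H S2 i \<bullet> dx)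
                              = H i \<bullet> (x + eta *\<^sub>R y) + e i)})
       \<longlongrightarrow> 1) (at_right 0)
   \<and> ((\<lambda>sigma2. measure (noise_measure w sigma2)
         {e. \<forall>N Rf. noisy_run H w sigma2 tau
                       (\<lambda>i. H i \<bullet> x + e i + eta * (zero_rows H S1 i \<bullet> dx)) N Rf
               \<longrightarrow> (\<forall>i\<in>Rf. H i \<bullet> x + e i + eta * (zero_rows H S1 i \<bullet> dx)
                              = H i \<bullet> (x + eta *\<^sub>R (dx - y)) + e i)})
       \<longlongrightarrow> 1) (at_right 0)"
proof -
  have "\<forall>i. i \<notin> S1 \<union> S2 \<longrightarrow> H i \<bullet> dx = 0"
    using dx_null span_base[of dx "{dx}"] by auto
  note split = zero_rows_inner_complement[OF partition(1) this]
  have attack_S1: "H i \<bullet> x + e i + \<eta> * (zero_rows H S1 i \<bullet> dx)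
      = H i \<bullet> (x + \<eta> *\<^sub>R dx) + e i + - \<eta> * (zero_rows H S2 i \<bullet> dx)"
    for i x \<eta> and e :: "'m \<Rightarrow> real"
    by (simp add: split inner_add_right algebra_simps)
  have shift_S1: "x + \<eta> *\<^sub>R (dx - y) = (x + \<eta> *\<^sub>R dx) + (- \<eta>) *\<^sub>R y" for x \<eta>
    by (simp add: algebra_simps)
  show ?thesis
    unfolding attack_S1 shift_S1
    using noisy_run_fits_shifted_state[OF w_pos observable y_def] by blast
qed

end
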